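(* Let $w\in\mathbb R^m_{++}$ with $\sum_iw_i=1$, $x=x(w)$, $y=y(w)$, $\delta_i=w_i/(y_i\|\Delta b_i\|_1)$, and let $\tilde b_i=b_i^{(0)}+\sum_{l=1}^{N_i}\Delta b_i^l\tilde z_i^l$ with $\tilde z_i^1,\dots,\tilde z_i^{N_i}$ independent, symmetrically distributed random variables in $[-1,1]$. Let $\max(\Delta b_i)$ be the largest entry of $\Delta b_i$. Then $$\Pr\{\langle a_i,x\rangle>\tilde b_i\}\le B\Bigl(N_i,\ \delta_i\frac{\|\Delta b_i\|_1}{\max(\Delta b_i)}\Bigr),$$ where for $N\in\mathbb N$, $p>0$: $B(N,p)=2^{-N}\bigl[(1-\mu)\binom{N}{\lfloor\nu\rfloor}+\sum_{k=\lfloor\nu\rfloor+1}^{N}\binom{N}{k}\bigr]$ with $\nu=(N+p)/2$, $\mu=\nu-\lfloor\nu\rfloor$.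
   Context: $A\in\mathbb R^{m\times n}$ (rows $a_i^\top$) has full column rank $n\le m$, $b^{(0)}\in\mathbb R^m$, and $\{x:Ax\le b^{(0)}\}$ is bounded with nonempty interior. For $w\in\mathbb R^m_{++}$, the weighted center $(x(w),y(w),s(w))$ is the unique solution of $Ax+s=b^{(0)}$, $s>0$, $A^\top y=0$, $\mathrm{Diag}(s)y=w$. $\Delta b_i=(\Delta b_i^1,\dots,\Delta b_i^{N_i})$ is a nonzero vector with nonnegative entries. *)

theory Defs
  imports "HOL-Probability.Probability"
begin

definition polytope :: "real^'n^'m \<Rightarrow> real^'m \<Rightarrow> (real^'n) set" where
  "polytope A b0 = {x. \<forall>i. (A *v x) $ i \<le> b0 $ i}"

definition is_weighted_center ::
  "real^'n^'m \<Rightarrow> real^'m \<Rightarrow> real^'m \<Rightarrow> real^'n \<Rightarrow> real^'m \<Rightarrow> real^'m \<Rightarrow> bool" where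
  "is_weighted_center A b0 w x y s \<longleftrightarrow>
     A *v x + s = b0 \<and> (\<forall>i. s $ i > 0) \<and> transpose A *v y = 0 \<and> (\<forall>i. s $ i * y $ i = w $ i)"

definition Bbound :: "nat \<Rightarrow> real \<Rightarrow> real" where
  "Bbound N p =
     (let \<nu> = (real N + p) / 2; f = nat \<lfloor>\<nu>\<rfloor>; \<mu> = \<nu> - real_of_int \<lfloor>\<nu>\<rfloor>
      in ((1 - \<mu>) * real (N choose f) + (\<Sum>k\<in>{f+1..N}. real (N choose k))) / 2 ^ N)"

end

theory Submission
  imports Defs
begin

text \<open>
  At the weighted center a_i x = b_i - s_i. With m = max \<Delta>b_i and c_l = - \<Delta>b_i^l / m in [-1, 0]
  the violation event lies in {s_i / m \<le> \<Sum>_l c_l z_l}, and s_i / m is exactly the argument of B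
  in the statement. It remains to show P(t \<le> X_1 + ... + X_N) \<le> B(N, t) for t > 0 and independent
  symmetric X_l with |X_l| \<le> 1, by induction on N.
  B(N, p) is the linear interpolation, at (N + p) / 2, of the upper tails k \<mapsto> P(Bin(N, 1/2) \<ge> k).
  It satisfies the Pascal recursion B(N + 1, p) = (B(N, p - 1) + B(N, p + 1)) / 2 and, because the
  binomial coefficients decrease beyond the median, the spreading inequality
  B(N, p - c) + B(N, p + c) \<le> B(N, p - 1) + B(N, p + 1) for p \<ge> 1 and 0 \<le> c \<le> 1.
  Conditioning on the new summand, whose law is symmetric, these two facts give the induction step
  for t > 1; for 0 < t \<le> 1 the sum is symmetric, so its tail is at most 1/2 \<le> B(N, t).
\<close>

definition binomial_tail :: "nat \<Rightarrow> nat \<Rightarrow> real" where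
  "binomial_tail N k = (\<Sum>j\<in>{k..N}. real (N choose j)) / 2 ^ N"

definition binomial_tail_interp :: "nat \<Rightarrow> real \<Rightarrow> real" where
  "binomial_tail_interp N x =
     (1 - (x - \<lfloor>x\<rfloor>)) * binomial_tail N (nat \<lfloor>x\<rfloor>) + (x - \<lfloor>x\<rfloor>) * binomial_tail N (Suc (nat \<lfloor>x\<rfloor>))"

lemma binomial_tail_Suc: "binomial_tail N k = real (N choose k) / 2 ^ N + binomial_tail N (Suc k)"
proof (cases "k \<le> N")
  case True
  then show ?thesis
    unfolding binomial_tail_def by (simp add: sum.atLeast_Suc_atMost add_divide_distrib)
qed (simp add: binomial_tail_def binomial_eq_0)

lemma binomial_tail_Suc_le: "binomial_tail N (Suc k) \<le> binomial_tail N k"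
  using binomial_tail_Suc[of N k] by simp

lemma binomial_tail_complement:
  assumes "k \<le> Suc N"
  shows "binomial_tail N k + binomial_tail N (Suc N - k) = 1"
proof -
  have "(\<Sum>j\<in>{Suc N - k..N}. real (N choose j)) = (\<Sum>j\<in>{0..<k}. real (N choose j))"
    by (rule sum.reindex_bij_witness[where i="\<lambda>j. N - j" and j="\<lambda>j. N - j"])
       (use assms in \<open>auto simp: binomial_symmetric[symmetric]\<close>)
  moreover have "{0..N} = {0..<k} \<union> {k..N}"
    using assms by auto
  then have "(\<Sum>j\<in>{0..<k}. real (N choose j)) + (\<Sum>j\<in>{k..N}. real (N choose j))
      = (\<Sum>j\<in>{0..N}. real (N choose j))"
    by (simp add: sum.union_disjoint[symmetric] ivl_disj_int)
  also have "\<dots> = 2 ^ N"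
    using choose_row_sum[of N] by (simp add: atLeast0AtMost flip: of_nat_sum)
  ultimately show ?thesis
    unfolding binomial_tail_def by (simp add: add_divide_distrib[symmetric])
qed

lemma binomial_tail_Suc_Suc:
  "binomial_tail (Suc N) (Suc k) = (binomial_tail N k + binomial_tail N (Suc k)) / 2"
proof -
  have "(\<Sum>j\<in>{Suc k..Suc N}. real (Suc N choose j)) = (\<Sum>j\<in>{k..N}. real (Suc N choose Suc j))"
    by (rule sum.shift_bounds_cl_Suc_ivl)
  also have "\<dots> = (\<Sum>j\<in>{k..N}. real (N choose j)) + (\<Sum>j\<in>{k..N}. real (N choose Suc j))"
    by (simp add: sum.distrib)
  also have "(\<Sum>j\<in>{k..N}. real (N choose Suc j)) = (\<Sum>j\<in>{Suc k..N}. real (N choose j))"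
  proof (cases "k \<le> N")
    case True
    have "(\<Sum>j\<in>{k..N}. real (N choose Suc j)) = (\<Sum>j\<in>{Suc k..Suc N}. real (N choose j))"
      by (rule sum.shift_bounds_cl_Suc_ivl[symmetric])
    then show ?thesis
      using True by (simp add: sum.cl_ivl_Suc)
  qed simp
  finally show ?thesis
    unfolding binomial_tail_def by (simp add: field_simps)
qed

lemma binomial_tail_interp_Suc:
  assumes "1 \<le> x"
  shows "binomial_tail_interp (Suc N) x = (binomial_tail_interp N (x - 1) + binomial_tail_interp N x) / 2"
proof -
  have "0 < nat \<lfloor>x\<rfloor>"
    using assms by linarith
  then obtain k where k: "nat \<lfloor>x\<rfloor> = Suc k"
    using gr0_implies_Suc by blast
  have fl: "\<lfloor>x - 1\<rfloor> = \<lfloor>x\<rfloor> - 1" and "nat (\<lfloor>x\<rfloor> - 1) = k"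
    using k by linarith+
  moreover have "x - 1 - real_of_int \<lfloor>x - 1\<rfloor> = x - real_of_int \<lfloor>x\<rfloor>"
    using fl by simp
  ultimately show ?thesis
    unfolding binomial_tail_interp_def fl k binomial_tail_Suc_Suc by (simp add: field_simps)
qed

lemma binomial_tail_interp_two_pieces:
  assumes "real k \<le> x" "x < real k + 2"
  shows "binomial_tail_interp N x = binomial_tail N k - real (N choose k) / 2 ^ N * (x - k)
     + (real (N choose k) / 2 ^ N - real (N choose Suc k) / 2 ^ N) * max (x - k - 1) 0"
proof (cases "x < real k + 1")
  case True
  then have "\<lfloor>x\<rfloor> = int k"
    using assms by linarith
  then show ?thesis
    using True binomial_tail_Suc[of N k] unfolding binomial_tail_interp_def
    by (simp add: max_def field_simps)
next
  case False
  then have "\<lfloor>x\<rfloor> = int k + 1"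
    using assms by linarith
  then have n: "nat \<lfloor>x\<rfloor> = Suc k" and fr: "x - real_of_int \<lfloor>x\<rfloor> = x - k - 1"
    by simp_all
  have interp: "binomial_tail_interp N x
      = (1 - (x - k - 1)) * binomial_tail N (Suc k) + (x - k - 1) * binomial_tail N (Suc (Suc k))"
    unfolding binomial_tail_interp_def n fr by simp
  define a where "a = real (N choose k) / 2 ^ N"
  define b where "b = real (N choose Suc k) / 2 ^ N"
  have tail_k: "binomial_tail N k = a + binomial_tail N (Suc k)"
    unfolding a_def by (rule binomial_tail_Suc)
  have tail_Suc_Suc_k: "binomial_tail N (Suc (Suc k)) = binomial_tail N (Suc k) - b"
    using binomial_tail_Suc[of N "Suc k"] unfolding b_def by simp
  have hinge: "max (x - k - 1) 0 = x - k - 1"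
    using False by simp
  show ?thesis
    unfolding hinge a_def[symmetric] b_def[symmetric] interp tail_k tail_Suc_Suc_k
    by (simp add: algebra_simps)
qed

lemma binomial_tail_interp_spread:
  assumes "real N / 2 \<le> v - 1/2" "0 \<le> d" "d \<le> 1/2"
  shows "binomial_tail_interp N (v - d) + binomial_tail_interp N (v + d)
    \<le> binomial_tail_interp N (v - 1/2) + binomial_tail_interp N (v + 1/2)"
proof -
  define k where "k = nat \<lfloor>v - 1/2\<rfloor>"
  have "0 \<le> v - 1/2"
    using assms(1) of_nat_0_le_iff[of N] by linarith
  then have kv: "real k \<le> v - 1/2" "v - 1/2 < real k + 1"
    unfolding k_def by linarith+
  define a where "a = real (N choose k) / 2 ^ N"
  define b where "b = real (N choose Suc k) / 2 ^ N"
  have "b \<le> a"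
  proof (cases "Suc k \<le> N")
    case True
    have "N div 2 \<le> k"
      using kv assms(1) by linarith
    then have "N choose Suc k \<le> N choose k"
      using True by (intro binomial_antimono) auto
    then show ?thesis
      unfolding a_def b_def by (simp add: divide_right_mono)
  qed (simp add: a_def b_def binomial_eq_0)
  have pieces: "\<And>x. real k \<le> x \<Longrightarrow> x < real k + 2 \<Longrightarrow>
      binomial_tail_interp N x = binomial_tail N k - a * (x - k) + (a - b) * max (x - k - 1) 0"
    unfolding a_def b_def by (rule binomial_tail_interp_two_pieces)
  have "(a - b) * (max (v - d - k - 1) 0 + max (v + d - k - 1) 0)
     \<le> (a - b) * (max (v - 1/2 - k - 1) 0 + max (v + 1/2 - k - 1) 0)"
    using \<open>b \<le> a\<close> assms(2,3) by (intro mult_left_mono) (auto simp: algebra_simps)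
  then show ?thesis
    using kv assms(2,3) by (simp add: pieces algebra_simps)
qed

lemma Bbound_eq_binomial_tail_interp:
  assumes "0 \<le> real N + p"
  shows "Bbound N p = binomial_tail_interp N ((real N + p) / 2)"
proof -
  define \<nu> where "\<nu> = (real N + p) / 2"
  define f where "f = nat \<lfloor>\<nu>\<rfloor>"
  define \<mu> where "\<mu> = \<nu> - real_of_int \<lfloor>\<nu>\<rfloor>"
  have S: "(\<Sum>k\<in>{f+1..N}. real (N choose k)) = binomial_tail N (Suc f) * 2 ^ N"
    unfolding binomial_tail_def by simp
  have C: "real (N choose f) = (binomial_tail N f - binomial_tail N (Suc f)) * 2 ^ N"
    using binomial_tail_Suc[of N f] by (simp add: field_simps)
  have "Bbound N p = ((1 - \<mu>) * real (N choose f) + (\<Sum>k\<in>{f+1..N}. real (N choose k))) / 2 ^ N"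
    unfolding Bbound_def Let_def \<nu>_def f_def \<mu>_def by simp
  also have "\<dots> = (1 - \<mu>) * binomial_tail N f + \<mu> * binomial_tail N (Suc f)"
    unfolding S C by (simp add: field_simps)
  also have "\<dots> = binomial_tail_interp N \<nu>"
    unfolding binomial_tail_interp_def \<mu>_def f_def by simp
  finally show ?thesis
    unfolding \<nu>_def .
qed

lemma Bbound_nonneg: "0 \<le> Bbound N p"
proof -
  define \<nu> where "\<nu> = (real N + p) / 2"
  have "\<nu> - real_of_int \<lfloor>\<nu>\<rfloor> < 1"
    by linarith
  then show ?thesis
    unfolding Bbound_def Let_def \<nu>_def[symmetric]
    by (intro divide_nonneg_pos add_nonneg_nonneg mult_nonneg_nonneg sum_nonneg) auto
qed

lemma Bbound_Suc:
  assumes "1 \<le> p"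
  shows "Bbound (Suc N) p = (Bbound N (p - 1) + Bbound N (p + 1)) / 2"
proof -
  define x where "x = (real (Suc N) + p) / 2"
  have e1: "(real N + (p - 1)) / 2 = x - 1" and e2: "(real N + (p + 1)) / 2 = x"
    unfolding x_def by (simp_all add: field_simps)
  have "Bbound (Suc N) p = binomial_tail_interp (Suc N) x"
    unfolding x_def using assms by (intro Bbound_eq_binomial_tail_interp) simp
  moreover have "Bbound N (p - 1) = binomial_tail_interp N (x - 1)"
    unfolding e1[symmetric] using assms by (intro Bbound_eq_binomial_tail_interp) simp
  moreover have "Bbound N (p + 1) = binomial_tail_interp N x"
    unfolding e2[symmetric] using assms by (intro Bbound_eq_binomial_tail_interp) simp
  moreover have "1 \<le> x"
    using assms unfolding x_def by simp
  ultimately show ?thesis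
    using binomial_tail_interp_Suc by simp
qed

lemma Bbound_spread:
  assumes "1 \<le> p" "0 \<le> c" "c \<le> 1"
  shows "Bbound N (p - c) + Bbound N (p + c) \<le> Bbound N (p - 1) + Bbound N (p + 1)"
proof -
  define v where "v = (real N + p) / 2"
  have e: "\<And>q. (real N + (p + q)) / 2 = v + q / 2" "\<And>q. (real N + (p - q)) / 2 = v - q / 2"
    unfolding v_def by (auto simp: field_simps)
  have "real N / 2 \<le> v - 1/2"
    unfolding v_def using assms by (simp add: field_simps)
  moreover have "\<And>q. 0 \<le> q \<Longrightarrow> q \<le> 1 \<Longrightarrow> 0 \<le> real N + (p - q)" "\<And>q. 0 \<le> q \<Longrightarrow> 0 \<le> real N + (p + q)"
    using assms by simp_all
  ultimately show ?thesis
    using binomial_tail_interp_spread[of N v "c/2"] assms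
    by (simp add: Bbound_eq_binomial_tail_interp e)
qed

lemma Bbound_ge_half:
  assumes "1 \<le> N" "0 < p" "p \<le> 1"
  shows "1/2 \<le> Bbound N p"
proof -
  define v where "v = (real N + p) / 2"
  have B: "Bbound N p = binomial_tail_interp N v"
    unfolding v_def using assms by (intro Bbound_eq_binomial_tail_interp) simp
  show ?thesis
  proof (cases "even N")
    case True
    then obtain r where r: "N = 2 * r" by blast
    have "\<lfloor>v\<rfloor> = int r" "v - r \<le> 1/2" "0 \<le> v - r"
      unfolding v_def r using assms by (simp_all add: floor_eq_iff field_simps)
    moreover have "binomial_tail N r + binomial_tail N (Suc r) = 1"
      using binomial_tail_complement[of r N] r by (simp add: Suc_diff_le)
    ultimately have "binomial_tail_interp N v
        = 1/2 + (1/2 - (v - r)) * (binomial_tail N r - binomial_tail N (Suc r))"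
      unfolding binomial_tail_interp_def by (simp add: algebra_simps)
    then show ?thesis
      using B \<open>v - r \<le> 1/2\<close> binomial_tail_Suc_le[of N r] by simp
  next
    case False
    then obtain r where r: "N = 2 * r + 1"
      using oddE by blast
    have half: "binomial_tail N (Suc r) = 1/2"
      using binomial_tail_complement[of "Suc r" N] r by simp
    show ?thesis
    proof (cases "v < real r + 1")
      case True
      then have "\<lfloor>v\<rfloor> = int r" "0 \<le> v - r"
        unfolding v_def r using assms by (simp_all add: floor_eq_iff)
      then have "binomial_tail_interp N v
          = binomial_tail N (Suc r) + (1 - (v - r)) * (binomial_tail N r - binomial_tail N (Suc r))"
        unfolding binomial_tail_interp_def by (simp add: algebra_simps)
      then show ?thesis
        using B True half binomial_tail_Suc_le[of N r] by simp
    next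
      case False
      then have "v = real r + 1"
        unfolding v_def r using assms by simp
      then show ?thesis
        using B half unfolding binomial_tail_interp_def by (simp add: nat_add_distrib)
    qed
  qed
qed

lemma borel_measurable_antimono:
  fixes f :: "real \<Rightarrow> real"
  assumes "antimono f"
  shows "f \<in> borel_measurable borel"
proof -
  have "mono (\<lambda>x. - f x)"
    using assms by (auto simp: mono_def antimono_def)
  then have "(\<lambda>x. - (- f x)) \<in> borel_measurable borel"
    by (intro borel_measurable_uminus borel_measurable_mono)
  then show ?thesis
    by simp
qed

context prob_space
begin

lemma emeasure_indep_var_pair:
  fixes Y S :: "'a \<Rightarrow> real" and \<phi> :: "real \<times> real \<Rightarrow> bool"
  assumes ind: "indep_var borel Y borel S"
    and \<phi>: "{p \<in> space (borel \<Otimes>\<^sub>M borel). \<phi> p} \<in> sets (borel \<Otimes>\<^sub>M borel)"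
  shows "emeasure M {\<omega>\<in>space M. \<phi> (Y \<omega>, S \<omega>)}
    = (\<integral>\<^sup>+\<omega>. emeasure M {\<omega>'\<in>space M. \<phi> (Y \<omega>, S \<omega>')} \<partial>M)"
proof -
  define A where "A = {p \<in> space (borel \<Otimes>\<^sub>M borel). \<phi> p}"
  from ind[unfolded indep_var_distribution_eq]
  have rvY: "Y \<in> borel_measurable M" and rvS: "S \<in> borel_measurable M"
    and joint: "distr M borel Y \<Otimes>\<^sub>M distr M borel S = distr M (borel \<Otimes>\<^sub>M borel) (\<lambda>x. (Y x, S x))"
    by auto
  have A: "A \<in> sets (borel \<Otimes>\<^sub>M borel)"
    using \<phi> A_def by simp
  then have A': "A \<in> sets (distr M borel Y \<Otimes>\<^sub>M distr M borel S)"
    by (simp cong: sets_pair_measure_cong)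
  interpret S: sigma_finite_measure "distr M borel S"
    by (intro prob_space_imp_sigma_finite prob_space_distr rvS)
  have "(\<lambda>x. (Y x, S x)) \<in> measurable M (borel \<Otimes>\<^sub>M borel)"
    using rvY rvS by measurable
  then have "emeasure M {\<omega>\<in>space M. \<phi> (Y \<omega>, S \<omega>)}
      = emeasure (distr M (borel \<Otimes>\<^sub>M borel) (\<lambda>x. (Y x, S x))) A"
    by (subst emeasure_distr[OF _ A])
       (auto simp: A_def space_pair_measure intro!: arg_cong[where f="emeasure M"])
  also have "\<dots> = (\<integral>\<^sup>+y. emeasure (distr M borel S) (Pair y -` A) \<partial>distr M borel Y)"
    using S.emeasure_pair_measure_alt[OF A'] by (simp add: joint)
  also have "\<dots> = (\<integral>\<^sup>+\<omega>. emeasure (distr M borel S) (Pair (Y \<omega>) -` A) \<partial>M)"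
    using S.measurable_emeasure_Pair[OF A'] rvY by (subst nn_integral_distr) auto
  also have "\<dots> = (\<integral>\<^sup>+\<omega>. emeasure M {\<omega>'\<in>space M. \<phi> (Y \<omega>, S \<omega>')} \<partial>M)"
  proof (intro nn_integral_cong)
    fix \<omega>
    have "Pair (Y \<omega>) -` A \<in> sets borel"
      using A by (metis sets_Pair1)
    then show "emeasure (distr M borel S) (Pair (Y \<omega>) -` A) = emeasure M {\<omega>'\<in>space M. \<phi> (Y \<omega>, S \<omega>')}"
      by (subst emeasure_distr[OF rvS])
         (auto simp: A_def space_pair_measure intro!: arg_cong[where f="emeasure M"])
  qed
  finally show ?thesis .
qed

lemma nn_integral_symmetric:
  fixes Y :: "'a \<Rightarrow> real"
  assumes "Y \<in> borel_measurable M" "distr M borel Y = distr M borel (\<lambda>\<omega>. - Y \<omega>)"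
    and "g \<in> borel_measurable borel"
  shows "(\<integral>\<^sup>+\<omega>. g (Y \<omega>) \<partial>M) = (\<integral>\<^sup>+\<omega>. g (- Y \<omega>) \<partial>M)"
proof -
  have "(\<integral>\<^sup>+\<omega>. g (Y \<omega>) \<partial>M) = (\<integral>\<^sup>+y. g y \<partial>distr M borel Y)"
    using assms by (subst nn_integral_distr) auto
  also have "\<dots> = (\<integral>\<^sup>+y. g y \<partial>distr M borel (\<lambda>\<omega>. - Y \<omega>))"
    by (simp add: assms(2))
  also have "\<dots> = (\<integral>\<^sup>+\<omega>. g (- Y \<omega>) \<partial>M)"
    using assms by (subst nn_integral_distr) auto
  finally show ?thesis .
qed

lemma antimono_prob_ge:
  fixes S :: "'a \<Rightarrow> real"
  assumes "S \<in> borel_measurable M"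
  shows "antimono (\<lambda>u. prob {\<omega>\<in>space M. u \<le> S \<omega>})"
  using assms by (intro antimonoI finite_measure_mono) auto

lemma emeasure_indep_add_ge:
  fixes Y S :: "'a \<Rightarrow> real"
  assumes "indep_var borel Y borel S"
  shows "emeasure M {\<omega>\<in>space M. s \<le> Y \<omega> + S \<omega>}
    = (\<integral>\<^sup>+\<omega>. ennreal (prob {\<omega>'\<in>space M. s - Y \<omega> \<le> S \<omega>'}) \<partial>M)"
proof -
  have "emeasure M {\<omega>\<in>space M. (\<lambda>p. s \<le> fst p + snd p) (Y \<omega>, S \<omega>)}
      = (\<integral>\<^sup>+\<omega>. emeasure M {\<omega>'\<in>space M. (\<lambda>p. s \<le> fst p + snd p) (Y \<omega>, S \<omega>')} \<partial>M)"
    by (rule emeasure_indep_var_pair[OF assms]) measurable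
  then show ?thesis
    by (simp add: emeasure_eq_measure algebra_simps)
qed

lemma emeasure_indep_add_le:
  fixes Y S :: "'a \<Rightarrow> real"
  assumes "indep_var borel Y borel S"
  shows "emeasure M {\<omega>\<in>space M. Y \<omega> + S \<omega> \<le> - s}
    = (\<integral>\<^sup>+\<omega>. ennreal (prob {\<omega>'\<in>space M. S \<omega>' \<le> - (s + Y \<omega>)}) \<partial>M)"
proof -
  have "emeasure M {\<omega>\<in>space M. (\<lambda>p. fst p + snd p \<le> - s) (Y \<omega>, S \<omega>)}
      = (\<integral>\<^sup>+\<omega>. emeasure M {\<omega>'\<in>space M. (\<lambda>p. fst p + snd p \<le> - s) (Y \<omega>, S \<omega>')} \<partial>M)"
    by (rule emeasure_indep_var_pair[OF assms]) measurable
  then show ?thesis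
    by (simp add: emeasure_eq_measure algebra_simps)
qed

lemma indep_add_symmetric_tails:
  fixes Y S :: "'a \<Rightarrow> real"
  assumes ind: "indep_var borel Y borel S"
    and Y_sym: "distr M borel Y = distr M borel (\<lambda>\<omega>. - Y \<omega>)"
    and S_sym: "\<And>u. prob {\<omega>\<in>space M. u \<le> S \<omega>} = prob {\<omega>\<in>space M. S \<omega> \<le> - u}"
  shows "prob {\<omega>\<in>space M. s \<le> Y \<omega> + S \<omega>} = prob {\<omega>\<in>space M. Y \<omega> + S \<omega> \<le> - s}"
proof -
  define F where "F u = prob {\<omega>\<in>space M. u \<le> S \<omega>}" for u
  have rvY: "Y \<in> borel_measurable M" and rvS: "S \<in> borel_measurable M"
    using ind by (auto dest: indep_var_rv1 indep_var_rv2)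
  have "antimono (\<lambda>y. F (s + y))"
    using antimono_prob_ge[OF rvS] unfolding F_def antimono_def by simp
  then have [measurable]: "(\<lambda>y. F (s + y)) \<in> borel_measurable borel"
    by (rule borel_measurable_antimono)
  have "emeasure M {\<omega>\<in>space M. s \<le> Y \<omega> + S \<omega>} = (\<integral>\<^sup>+\<omega>. ennreal (F (s + - Y \<omega>)) \<partial>M)"
    unfolding emeasure_indep_add_ge[OF ind] F_def by simp
  also have "\<dots> = (\<integral>\<^sup>+\<omega>. ennreal (F (s + Y \<omega>)) \<partial>M)"
    by (rule nn_integral_symmetric[OF rvY Y_sym, symmetric]) measurable
  also have "\<dots> = emeasure M {\<omega>\<in>space M. Y \<omega> + S \<omega> \<le> - s}"
    unfolding emeasure_indep_add_le[OF ind] F_def S_sym ..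
  finally show ?thesis
    by (simp add: emeasure_eq_measure)
qed

lemma indep_add_tail_le_Bbound:
  fixes Y S :: "'a \<Rightarrow> real"
  assumes ind: "indep_var borel Y borel S"
    and Y_sym: "distr M borel Y = distr M borel (\<lambda>\<omega>. - Y \<omega>)"
    and Y_bounded: "\<And>\<omega>. \<omega> \<in> space M \<Longrightarrow> \<bar>Y \<omega>\<bar> \<le> 1"
    and S_tail: "\<And>u. 0 < u \<Longrightarrow> prob {\<omega>\<in>space M. u \<le> S \<omega>} \<le> Bbound n u"
    and "1 < t"
  shows "prob {\<omega>\<in>space M. t \<le> Y \<omega> + S \<omega>} \<le> Bbound (Suc n) t"
proof -
  define F where "F u = prob {\<omega>\<in>space M. u \<le> S \<omega>}" for u
  let ?A = "{\<omega>\<in>space M. t \<le> Y \<omega> + S \<omega>}"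
  have rvY[measurable]: "Y \<in> borel_measurable M" and rvS: "S \<in> borel_measurable M"
    using ind by (auto dest: indep_var_rv1 indep_var_rv2)
  have "antimono (\<lambda>y. F (t + y))"
    using antimono_prob_ge[OF rvS] unfolding F_def antimono_def by simp
  then have [measurable]: "(\<lambda>y. F (t + y)) \<in> borel_measurable borel"
    by (rule borel_measurable_antimono)
  have "mono (\<lambda>y. F (t - y))"
    unfolding F_def by (intro monoI antimonoD[OF antimono_prob_ge[OF rvS]]) simp
  then have [measurable]: "(\<lambda>y. F (t - y)) \<in> borel_measurable borel"
    by (rule borel_measurable_mono)
  have pointwise: "F (t - Y \<omega>) + F (t + Y \<omega>) \<le> 2 * Bbound (Suc n) t" if "\<omega> \<in> space M" for \<omega>
  proof -
    define c where "c = \<bar>Y \<omega>\<bar>"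
    have c: "0 \<le> c" "c \<le> 1"
      using Y_bounded[OF that] c_def by auto
    have "F (t - Y \<omega>) + F (t + Y \<omega>) = F (t - c) + F (t + c)"
      unfolding c_def by (cases "0 \<le> Y \<omega>") auto
    also have "\<dots> \<le> Bbound n (t - c) + Bbound n (t + c)"
      using S_tail c \<open>1 < t\<close> unfolding F_def by (intro add_mono) auto
    also have "\<dots> \<le> Bbound n (t - 1) + Bbound n (t + 1)"
      using \<open>1 < t\<close> c by (intro Bbound_spread) auto
    also have "\<dots> = 2 * Bbound (Suc n) t"
      using \<open>1 < t\<close> by (simp add: Bbound_Suc)
    finally show ?thesis .
  qed
  have "ennreal (prob ?A + prob ?A) = emeasure M ?A + emeasure M ?A"
    by (subst ennreal_plus) (auto simp: emeasure_eq_measure)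
  also have "\<dots> = (\<integral>\<^sup>+\<omega>. ennreal (F (t - Y \<omega>)) \<partial>M) + (\<integral>\<^sup>+\<omega>. ennreal (F (t + - Y \<omega>)) \<partial>M)"
    unfolding emeasure_indep_add_ge[OF ind] F_def by simp
  also have "\<dots> = (\<integral>\<^sup>+\<omega>. ennreal (F (t - Y \<omega>)) \<partial>M) + (\<integral>\<^sup>+\<omega>. ennreal (F (t + Y \<omega>)) \<partial>M)"
    by (subst nn_integral_symmetric[OF rvY Y_sym, symmetric]) measurable
  also have "\<dots> = (\<integral>\<^sup>+\<omega>. ennreal (F (t - Y \<omega>)) + ennreal (F (t + Y \<omega>)) \<partial>M)"
    by (intro nn_integral_add[symmetric]) measurable
  also have "\<dots> \<le> (\<integral>\<^sup>+\<omega>. ennreal (2 * Bbound (Suc n) t) \<partial>M)"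
    using pointwise unfolding F_def
    by (intro nn_integral_mono) (metis ennreal_leI ennreal_plus measure_nonneg)
  also have "\<dots> = ennreal (2 * Bbound (Suc n) t)"
    by (simp add: emeasure_space_1)
  finally have "prob ?A + prob ?A \<le> 2 * Bbound (Suc n) t"
    using Bbound_nonneg by (subst (asm) ennreal_le_iff) auto
  then show ?thesis
    by simp
qed

lemma prob_ge_le_half_if_symmetric:
  fixes S :: "'a \<Rightarrow> real"
  assumes "S \<in> borel_measurable M"
    and "prob {\<omega>\<in>space M. t \<le> S \<omega>} = prob {\<omega>\<in>space M. S \<omega> \<le> - t}" "0 < t"
  shows "prob {\<omega>\<in>space M. t \<le> S \<omega>} \<le> 1/2"
proof -
  have "prob {\<omega>\<in>space M. t \<le> S \<omega>} + prob {\<omega>\<in>space M. S \<omega> \<le> - t}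
      = prob ({\<omega>\<in>space M. t \<le> S \<omega>} \<union> {\<omega>\<in>space M. S \<omega> \<le> - t})"
    using assms by (intro finite_measure_Union[symmetric]) auto
  also have "\<dots> \<le> 1"
    by simp
  finally show ?thesis
    using assms(2) by simp
qed

lemma indep_sum_symmetric_tails:
  fixes X :: "'i \<Rightarrow> 'a \<Rightarrow> real"
  assumes "finite I" "indep_vars (\<lambda>_. borel) X I"
    and "\<And>l. l \<in> I \<Longrightarrow> distr M borel (X l) = distr M borel (\<lambda>\<omega>. - X l \<omega>)"
  shows "prob {\<omega>\<in>space M. s \<le> (\<Sum>l\<in>I. X l \<omega>)} = prob {\<omega>\<in>space M. (\<Sum>l\<in>I. X l \<omega>) \<le> - s}"
  using assms
proof (induction I arbitrary: s rule: finite_induct)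
  case empty
  then show ?case
    by (simp add: le_minus_iff)
next
  case (insert i I)
  have "indep_vars (\<lambda>_. borel) X I"
    using insert.prems(1) by (rule indep_vars_subset) auto
  then have "\<And>u. prob {\<omega>\<in>space M. u \<le> (\<Sum>l\<in>I. X l \<omega>)} = prob {\<omega>\<in>space M. (\<Sum>l\<in>I. X l \<omega>) \<le> - u}"
    using insert.IH insert.prems(2) by blast
  then show ?case
    using insert indep_add_symmetric_tails[OF indep_vars_sum[OF insert.hyps insert.prems(1)]]
    by simp
qed

lemma indep_sum_tail_le_Bbound:
  fixes X :: "'i \<Rightarrow> 'a \<Rightarrow> real"
  assumes "finite I" "indep_vars (\<lambda>_. borel) X I"
    and "\<And>l. l \<in> I \<Longrightarrow> distr M borel (X l) = distr M borel (\<lambda>\<omega>. - X l \<omega>)"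
    and "\<And>l \<omega>. l \<in> I \<Longrightarrow> \<omega> \<in> space M \<Longrightarrow> \<bar>X l \<omega>\<bar> \<le> 1"
    and "0 < t"
  shows "prob {\<omega>\<in>space M. t \<le> (\<Sum>l\<in>I. X l \<omega>)} \<le> Bbound (card I) t"
  using assms
proof (induction I arbitrary: t rule: finite_induct)
  case empty
  then show ?case
    using Bbound_nonneg by (simp add: not_le)
next
  case (insert i I)
  have ind: "indep_var borel (X i) borel (\<lambda>\<omega>. \<Sum>l\<in>I. X l \<omega>)"
    by (rule indep_vars_sum[OF insert.hyps insert.prems(1)])
  show ?case
  proof (cases "t \<le> 1")
    case True
    have "\<And>l. l \<in> insert i I \<Longrightarrow> X l \<in> borel_measurable M"
      using insert.prems(1) by (auto simp: indep_vars_def)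
    then have "prob {\<omega>\<in>space M. t \<le> (\<Sum>l\<in>insert i I. X l \<omega>)} \<le> 1/2"
      using insert.prems(1,2,4)
      by (intro prob_ge_le_half_if_symmetric indep_sum_symmetric_tails) (auto intro: insert.hyps)
    also have "\<dots> \<le> Bbound (card (insert i I)) t"
      using True insert by (intro Bbound_ge_half) auto
    finally show ?thesis .
  next
    case False
    have "indep_vars (\<lambda>_. borel) X I"
      using insert.prems(1) by (rule indep_vars_subset) auto
    then have "prob {\<omega>\<in>space M. t \<le> X i \<omega> + (\<Sum>l\<in>I. X l \<omega>)} \<le> Bbound (Suc (card I)) t"
      using False insert by (intro indep_add_tail_le_Bbound[OF ind]) auto
    then show ?thesis
      using insert.hyps by simp
  qed
qed

lemma indep_weighted_sum_tail_le_Bbound: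
  fixes z :: "'i \<Rightarrow> 'a \<Rightarrow> real" and c :: "'i \<Rightarrow> real"
  assumes I: "finite I" and indep: "indep_vars (\<lambda>_. borel) z I"
    and sym: "\<And>l. l \<in> I \<Longrightarrow> distr M borel (z l) = distr M borel (\<lambda>\<omega>. - z l \<omega>)"
    and z_bounded: "\<And>l \<omega>. l \<in> I \<Longrightarrow> \<omega> \<in> space M \<Longrightarrow> \<bar>z l \<omega>\<bar> \<le> 1"
    and c_bounded: "\<And>l. l \<in> I \<Longrightarrow> \<bar>c l\<bar> \<le> 1"
    and "0 < t"
  shows "prob {\<omega>\<in>space M. t \<le> (\<Sum>l\<in>I. c l * z l \<omega>)} \<le> Bbound (card I) t"
proof (rule indep_sum_tail_le_Bbound[OF I _ _ _ \<open>0 < t\<close>])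
  show "indep_vars (\<lambda>_. borel) (\<lambda>l \<omega>. c l * z l \<omega>) I"
    by (rule indep_vars_compose2[OF indep]) auto
next
  fix l assume l: "l \<in> I"
  then have [measurable]: "z l \<in> borel_measurable M"
    using indep by (auto simp: indep_vars_def)
  have "distr M borel (\<lambda>\<omega>. c l * z l \<omega>) = distr (distr M borel (z l)) borel (\<lambda>v. c l * v)"
    by (subst distr_distr) (auto simp: comp_def)
  also have "\<dots> = distr (distr M borel (\<lambda>\<omega>. - z l \<omega>)) borel (\<lambda>v. c l * v)"
    using sym[OF l] by simp
  also have "\<dots> = distr M borel (\<lambda>\<omega>. - (c l * z l \<omega>))"
    by (subst distr_distr) (auto simp: comp_def)
  finally show "distr M borel (\<lambda>\<omega>. c l * z l \<omega>) = distr M borel (\<lambda>\<omega>. - (c l * z l \<omega>))" .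
next
  fix l \<omega> assume "l \<in> I" "\<omega> \<in> space M"
  then show "\<bar>c l * z l \<omega>\<bar> \<le> 1"
    using c_bounded z_bounded by (simp add: abs_mult mult_le_one)
qed

end

lemma weighted_center_row:
  assumes "is_weighted_center A b0 w x y s"
  shows "(A $ i) \<bullet> x = b0 $ i - s $ i" "0 < s $ i" "y $ i = w $ i / s $ i"
proof -
  have "A *v x + s = b0" "0 < s $ i" "s $ i * y $ i = w $ i"
    using assms unfolding is_weighted_center_def by auto
  then show "(A $ i) \<bullet> x = b0 $ i - s $ i" "0 < s $ i" "y $ i = w $ i / s $ i"
    by (auto simp: matrix_vector_mul_component field_simps dest: arg_cong[where f="\<lambda>v. v $ i"])
qed

theorem mainTheorem20:
  fixes A :: "real^'n^'m" and b0 :: "real^'m"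
    and N :: "'m \<Rightarrow> nat" and \<Delta>b :: "'m \<Rightarrow> nat \<Rightarrow> real"
    and w :: "real^'m" and x :: "real^'n" and y s :: "real^'m"
    and M :: "'a measure" and z :: "nat \<Rightarrow> 'a \<Rightarrow> real" and i :: 'm
  assumes rankA: "rank A = CARD('n)"
    and nm: "CARD('n) \<le> CARD('m)"
    and bnd: "bounded (polytope A b0)"
    and intr: "interior (polytope A b0) \<noteq> {}"
    and db_nonneg: "\<And>j l. l \<in> {1..N j} \<Longrightarrow> \<Delta>b j l \<ge> 0"
    and db_nonzero: "\<And>j. \<exists>l\<in>{1..N j}. \<Delta>b j l \<noteq> 0"
    and w_pos: "\<And>j. w $ j > 0"
    and w_sum: "(\<Sum>j\<in>UNIV. w $ j) = 1"
    and center: "is_weighted_center A b0 w x y s"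
    and P: "prob_space M"
    and z_rv: "\<And>l. l \<in> {1..N i} \<Longrightarrow> z l \<in> borel_measurable M"
    and z_indep: "prob_space.indep_vars M (\<lambda>_. borel) z {1..N i}"
    and z_sym: "\<And>l. l \<in> {1..N i} \<Longrightarrow> distr M borel (z l) = distr M borel (\<lambda>\<omega>. - z l \<omega>)"
    and z_range: "\<And>l \<omega>. l \<in> {1..N i} \<Longrightarrow> \<omega> \<in> space M \<Longrightarrow> z l \<omega> \<in> {-1..1}"
  shows "measure M {\<omega> \<in> space M. (A $ i) \<bullet> x > b0 $ i + (\<Sum>l\<in>{1..N i}. \<Delta>b i l * z l \<omega>)}
           \<le> Bbound (N i)
               ((w $ i / (y $ i * (\<Sum>l\<in>{1..N i}. \<bar>\<Delta>b i l\<bar>)))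
                 * ((\<Sum>l\<in>{1..N i}. \<bar>\<Delta>b i l\<bar>) / Max (\<Delta>b i ` {1..N i})))"
proof -
  interpret prob_space M
    by (rule P)
  define I where "I = {1..N i}"
  define m where "m = Max (\<Delta>b i ` I)"
  obtain l0 where l0: "l0 \<in> I" "\<Delta>b i l0 \<noteq> 0"
    using db_nonzero[of i] unfolding I_def by blast
  have le_m: "\<Delta>b i l \<le> m" if "l \<in> I" for l
    using that unfolding m_def by (intro Max_ge) (auto simp: I_def)
  have "0 < \<Delta>b i l0"
    using db_nonneg[of l0 i] l0 unfolding I_def by force
  then have m_pos: "0 < m" and D_pos: "0 < (\<Sum>l\<in>I. \<bar>\<Delta>b i l\<bar>)"
    using le_m[OF l0(1)] member_le_sum[of l0 I "\<lambda>l. \<bar>\<Delta>b i l\<bar>"] l0(1) unfolding I_def by auto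
  note row = weighted_center_row[OF center, of i]
  have arg: "(w $ i / (y $ i * (\<Sum>l\<in>I. \<bar>\<Delta>b i l\<bar>))) * ((\<Sum>l\<in>I. \<bar>\<Delta>b i l\<bar>) / m) = s $ i / m"
    unfolding row(3) using row(2) D_pos w_pos[of i] by (simp add: field_simps)
  have "measure M {\<omega> \<in> space M. (A $ i) \<bullet> x > b0 $ i + (\<Sum>l\<in>I. \<Delta>b i l * z l \<omega>)}
      \<le> prob {\<omega>\<in>space M. s $ i / m \<le> (\<Sum>l\<in>I. (- \<Delta>b i l / m) * z l \<omega>)}"
    using z_rv m_pos unfolding I_def row(1)
    by (intro finite_measure_mono)
       (auto simp: sum_divide_distrib[symmetric] sum_negf field_simps)
  also have "\<dots> \<le> Bbound (card I) (s $ i / m)"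
    using z_indep z_sym z_range le_m db_nonneg row(2) m_pos unfolding I_def
    by (intro indep_weighted_sum_tail_le_Bbound) (auto simp: abs_le_iff)
  finally show ?thesis
    unfolding arg[symmetric] unfolding I_def m_def by simp
qed

end
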